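(* Let $X(1),\dots,X(n)$ be i.i.d. $\mathcal{N}(0,\sigma_X^2)$ with $\sigma_X^2>0$, and let $\hat X^n=(\hat X(1),\dots,\hat X(n))$ be any random vector in $\mathbb{R}^n$ with $\mathbb{E}[\hat X^n\mid X^n]=X^n$ almost surely and with $0<D(X^n,\hat X^n)<\infty$, where $D(X^n,\hat X^n)=\frac1n\sum_{t=1}^n\mathbb{E}[(X(t)-\hat X(t))^2]$. Then $$\frac1n I(X^n;\hat X^n)\ \ge\ \frac12\log\Big(1+\frac{\sigma_X^2}{D(X^n,\hat X^n)}\Big).$$
   Context: $I(\cdot;\cdot)$ denotes mutual information; logarithms are natural. *)

theory Defs
  imports "HOL-Probability.Probability"
begin

text \<open>Mutual information in nats (natural logarithm, base e), with values in the
extended reals: it is the KL divergence of the joint law from the product of the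
marginals, and equals +infinity when the joint law is not absolutely continuous
w.r.t. the product of the marginals or when the information density is not
integrable (the standard convention).\<close>

definition mutual_info ::
  "'a measure \<Rightarrow> 'b measure \<Rightarrow> 'c measure \<Rightarrow> ('a \<Rightarrow> 'b) \<Rightarrow> ('a \<Rightarrow> 'c) \<Rightarrow> ereal" where
  "mutual_info M S T X Y =
     (let P = distr M S X \<Otimes>\<^sub>M distr M T Y;
          Q = distr M (S \<Otimes>\<^sub>M T) (\<lambda>x. (X x, Y x))
      in if absolutely_continuous P Q \<and> integrable Q (entropy_density (exp 1) P Q)
         then ereal (prob_space.mutual_information M (exp 1) S T X Y)
         else \<infinity>)"

end

theory Submission imports Defs begin

text \<open>For every test function \<open>g\<close> whose exponential has integral at most 1 against the
  product of the marginal laws of \<open>X\<close> and \<open>Xhat\<close>, Gibbs' variational inequality gives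
  \<open>\<bbbE> g(X, Xhat) \<le> I(X; Xhat)\<close>. Take for \<open>g\<close> the log-likelihood ratio of the Gaussian backward
  channel \<open>X(t) \<sim> N(a Xhat(t), s\<^sup>2)\<close> against the source law \<open>N(0, \<sigma>\<^sup>2)\<close>; by independence of
  the coordinates, its exponential integrates to 1 against the law of \<open>X\<close> for every value of
  \<open>Xhat\<close>. Unbiasedness makes the error \<open>Xhat(t) - X(t)\<close> orthogonal to \<open>X(t)\<close>, so
  \<open>\<bbbE>(X(t) - a Xhat(t))\<^sup>2 = (1 - a)\<^sup>2 \<sigma>\<^sup>2 + a\<^sup>2 D\<^sub>t\<close>, and the linear MMSE parameters
  \<open>a = \<sigma>\<^sup>2 / (\<sigma>\<^sup>2 + D)\<close>, \<open>s\<^sup>2 = \<sigma>\<^sup>2 D / (\<sigma>\<^sup>2 + D)\<close> give \<open>\<bbbE> g = (n / 2) ln (1 + \<sigma>\<^sup>2 / D)\<close>.\<close>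

lemma nn_integral_density_divide_le:
  fixes f :: "'b \<Rightarrow> real"
  assumes [measurable]: "r \<in> borel_measurable P" "f \<in> borel_measurable P"
    and f_nonneg: "\<And>z. 0 \<le> f z"
  shows "(\<integral>\<^sup>+ z. ennreal (f z / enn2real (r z)) \<partial>density P r) \<le> (\<integral>\<^sup>+ z. ennreal (f z) \<partial>P)"
proof -
  have "r z * ennreal (f z / enn2real (r z)) \<le> ennreal (f z)" for z
  proof (cases "r z = \<infinity>")
    case False
    then have "r z = ennreal (enn2real (r z))" by (simp add: less_top)
    moreover have "enn2real (r z) * (f z / enn2real (r z)) \<le> f z"
      using f_nonneg[of z] by (cases "enn2real (r z) = 0") auto
    ultimately show ?thesis
      using f_nonneg[of z] by (metis ennreal_leI ennreal_mult' enn2real_nonneg)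
  qed simp
  then show ?thesis
    by (simp add: nn_integral_density nn_integral_mono)
qed

lemma (in sigma_finite_measure) AE_enn2real_RN_deriv_pos:
  assumes "sigma_finite_measure N" and ac: "absolutely_continuous M N" and sets_eq: "sets N = sets M"
  shows "AE x in N. 0 < enn2real (RN_deriv M N x)"
proof -
  have "AE x in M. RN_deriv M N x \<noteq> \<infinity>"
    by (rule RN_deriv_finite[OF assms])
  then have "AE x in M. 0 < RN_deriv M N x \<longrightarrow> 0 < enn2real (RN_deriv M N x)"
    by eventually_elim (simp add: enn2real_positive_iff less_top)
  then have "AE x in density M (RN_deriv M N). 0 < enn2real (RN_deriv M N x)"
    by (subst AE_density) auto
  then show ?thesis
    by (simp only: density_RN_deriv[OF ac sets_eq])
qed

text \<open>With \<open>\<rho> = dQ/dP\<close> and \<open>h = e\<^sup>g / \<rho>\<close>, the inequality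
  \<open>ln h \<le> h - 1\<close> gives \<open>\<integral> g - ln \<rho> dQ \<le> \<integral> h dQ - 1 \<le> \<integral> e\<^sup>g dP - 1 \<le> 0\<close>.\<close>
lemma KL_divergence_ge_integral:
  fixes P Q :: "'b measure" and g :: "'b \<Rightarrow> real"
  assumes "sigma_finite_measure P" and "prob_space Q"
    and ac: "absolutely_continuous P Q" and sets_eq: "sets Q = sets P"
    and g_meas[measurable]: "g \<in> borel_measurable P" and g_int: "integrable Q g"
    and ent_int: "integrable Q (entropy_density (exp 1) P Q)"
    and exp_le: "(\<integral>\<^sup>+ z. ennreal (exp (g z)) \<partial>P) \<le> 1"
  shows "integral\<^sup>L Q g \<le> KL_divergence (exp 1) P Q"
proof -
  interpret P: sigma_finite_measure P by fact
  interpret Q: prob_space Q by fact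
  define r where "r = RN_deriv P Q"
  define \<rho> where "\<rho> z = enn2real (r z)" for z
  define h where "h z = exp (g z) / \<rho> z" for z
  have [measurable]: "r \<in> borel_measurable P" unfolding r_def by simp
  have Q_eq: "Q = density P r"
    unfolding r_def using P.density_RN_deriv[OF ac sets_eq] by simp
  have [measurable]: "h \<in> borel_measurable Q"
    unfolding h_def \<rho>_def measurable_cong_sets[OF sets_eq refl] by measurable
  have h_nonneg: "0 \<le> h z" for z unfolding h_def \<rho>_def by simp
  have ent: "entropy_density (exp 1) P Q = (\<lambda>z. ln (\<rho> z))"
    unfolding entropy_density_def \<rho>_def r_def by (simp add: log_def fun_eq_iff)
  have \<rho>_pos: "AE z in Q. 0 < \<rho> z"
    unfolding \<rho>_def r_def
    by (rule P.AE_enn2real_RN_deriv_pos[OF Q.sigma_finite_measure_axioms ac sets_eq])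
  have h_le: "(\<integral>\<^sup>+ z. ennreal (h z) \<partial>Q) \<le> 1"
    using nn_integral_density_divide_le[of r P "\<lambda>z. exp (g z)"] exp_le
    unfolding h_def \<rho>_def Q_eq by simp
  then have h_int: "integrable Q h"
    using h_nonneg by (intro integrableI_nonneg) (auto simp: top.not_eq_extremum le_less_trans)
  have "integral\<^sup>L Q h \<le> 1"
    using h_le h_nonneg h_int by (subst integral_eq_nn_integral) (auto simp: enn2real_leI)
  have "integral\<^sup>L Q g - KL_divergence (exp 1) P Q = (\<integral>z. g z - ln (\<rho> z) \<partial>Q)"
    using g_int ent_int unfolding KL_divergence_def ent by simp
  also have "\<dots> \<le> (\<integral>z. h z - 1 \<partial>Q)"
  proof (rule integral_mono_AE)
    show "AE z in Q. g z - ln (\<rho> z) \<le> h z - 1"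
      using \<rho>_pos
    proof eventually_elim
      case (elim z)
      then have "ln (h z) = g z - ln (\<rho> z)" by (simp add: h_def ln_div)
      then show ?case using ln_le_minus_one[of "h z"] elim by (simp add: h_def)
    qed
  qed (use g_int ent_int h_int ent in simp_all)
  also have "\<dots> = integral\<^sup>L Q h - 1" using h_int by (simp add: Q.prob_space)
  finally show ?thesis using \<open>integral\<^sup>L Q h \<le> 1\<close> by simp
qed

lemma mutual_info_ge_integral:
  fixes g :: "'b \<times> 'c \<Rightarrow> real"
  assumes "prob_space M"
    and [measurable]: "X \<in> measurable M S" "Y \<in> measurable M T" "g \<in> borel_measurable (S \<Otimes>\<^sub>M T)"
    and g_int: "integrable M (\<lambda>\<omega>. g (X \<omega>, Y \<omega>))"
    and exp_le: "\<And>y. y \<in> space T \<Longrightarrow> (\<integral>\<^sup>+ x. ennreal (exp (g (x, y))) \<partial>distr M S X) \<le> 1"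
  shows "ereal (\<integral>\<omega>. g (X \<omega>, Y \<omega>) \<partial>M) \<le> mutual_info M S T X Y"
proof -
  interpret prob_space M by fact
  define PX where "PX = distr M S X"
  define PY where "PY = distr M T Y"
  define Q where "Q = distr M (S \<Otimes>\<^sub>M T) (\<lambda>\<omega>. (X \<omega>, Y \<omega>))"
  interpret PXY: pair_prob_space PX PY
    unfolding PX_def PY_def
    by (simp add: pair_prob_space_def pair_sigma_finite_def prob_space_distr prob_space_imp_sigma_finite)
  have sets_eq: "sets Q = sets (PX \<Otimes>\<^sub>M PY)"
    unfolding Q_def PX_def PY_def by (simp cong: sets_pair_measure_cong)
  have "integral\<^sup>L Q g = (\<integral>\<omega>. g (X \<omega>, Y \<omega>) \<partial>M)"
    unfolding Q_def by (simp add: integral_distr)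
  moreover have "integrable Q g"
    unfolding Q_def using g_int by (simp add: integrable_distr_eq)
  moreover have "(\<integral>\<^sup>+ z. ennreal (exp (g z)) \<partial>(PX \<Otimes>\<^sub>M PY)) \<le> 1"
  proof -
    have "(\<integral>\<^sup>+ z. ennreal (exp (g z)) \<partial>(PX \<Otimes>\<^sub>M PY)) = (\<integral>\<^sup>+ y. (\<integral>\<^sup>+ x. ennreal (exp (g (x, y))) \<partial>PX) \<partial>PY)"
      by (rule PXY.nn_integral_snd[symmetric]) (simp add: PX_def PY_def)
    also have "\<dots> \<le> (\<integral>\<^sup>+ y. 1 \<partial>PY)"
      using exp_le by (intro nn_integral_mono) (simp add: PX_def PY_def)
    finally show ?thesis using PXY.M2.emeasure_space_1 by simp
  qed
  ultimately have "absolutely_continuous (PX \<Otimes>\<^sub>M PY) Q \<Longrightarrow>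
      integrable Q (entropy_density (exp 1) (PX \<Otimes>\<^sub>M PY) Q) \<Longrightarrow>
      (\<integral>\<omega>. g (X \<omega>, Y \<omega>) \<partial>M) \<le> KL_divergence (exp 1) (PX \<Otimes>\<^sub>M PY) Q"
    using KL_divergence_ge_integral[of "PX \<Otimes>\<^sub>M PY" Q g] sets_eq PXY.P.prob_space_axioms
    by (simp add: prob_space_imp_sigma_finite Q_def prob_space_distr PX_def PY_def)
  then show ?thesis
    unfolding mutual_info_def mutual_information_def Let_def PX_def PY_def Q_def by simp
qed

lemma integrable_mult_of_square_integrable:
  fixes f h :: "'b \<Rightarrow> real"
  assumes [measurable]: "f \<in> borel_measurable M" "h \<in> borel_measurable M"
    and "integrable M (\<lambda>x. (f x)\<^sup>2)" "integrable M (\<lambda>x. (h x)\<^sup>2)"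
  shows "integrable M (\<lambda>x. f x * h x)"
proof (rule Bochner_Integration.integrable_bound[of _ "\<lambda>x. (f x)\<^sup>2 + (h x)\<^sup>2"])
  have "\<bar>f x * h x\<bar> \<le> (f x)\<^sup>2 + (h x)\<^sup>2" for x
  proof -
    have "2 * \<bar>f x * h x\<bar> \<le> (f x)\<^sup>2 + (h x)\<^sup>2"
      using sum_squares_bound[of "\<bar>f x\<bar>" "\<bar>h x\<bar>"] by (simp add: abs_mult)
    then show ?thesis by linarith
  qed
  then show "AE x in M. norm (f x * h x) \<le> norm ((f x)\<^sup>2 + (h x)\<^sup>2)"
    by simp
qed (use assms in simp_all)

lemma (in sigma_finite_subalgebra) integral_mult_eq_integral_square_of_cond_exp:
  fixes f g :: "'a \<Rightarrow> real"
  assumes [measurable]: "f \<in> borel_measurable F" "g \<in> borel_measurable M"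
    and "integrable M (\<lambda>x. f x * g x)"
    and cond_exp: "AE x in M. real_cond_exp M F g x = f x"
  shows "(\<integral>x. f x * g x \<partial>M) = (\<integral>x. (f x)\<^sup>2 \<partial>M)"
proof -
  have "(\<integral>x. f x * g x \<partial>M) = (\<integral>x. f x * real_cond_exp M F g x \<partial>M)"
    using real_cond_exp_intg(2) assms by simp
  also have "\<dots> = (\<integral>x. (f x)\<^sup>2 \<partial>M)"
    using cond_exp by (intro integral_cong_AE) (auto simp: power2_eq_square measurable_from_subalg[OF subalg])
  finally show ?thesis .
qed

text \<open>The log-likelihood ratio \<open>ln (N(\<mu>, s\<^sup>2)(x) / N(0, \<sigma>\<^sup>2)(x))\<close>.\<close>
definition gaussian_log_ratio :: "real \<Rightarrow> real \<Rightarrow> real \<Rightarrow> real \<Rightarrow> real" where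
  "gaussian_log_ratio \<sigma> \<mu> s x = ln (\<sigma> / s) + x\<^sup>2 / (2 * \<sigma>\<^sup>2) - (x - \<mu>)\<^sup>2 / (2 * s\<^sup>2)"

lemma normal_density_mult_exp_gaussian_log_ratio:
  assumes "0 < \<sigma>" "0 < s"
  shows "normal_density 0 \<sigma> x * exp (gaussian_log_ratio \<sigma> \<mu> s x) = normal_density \<mu> s x"
proof -
  have sqrt_eq: "sqrt (2 * pi * r\<^sup>2) = sqrt (2 * pi) * r" if "0 < r" for r :: real
    using that by (simp add: real_sqrt_mult)
  have "exp (- (x - \<mu>)\<^sup>2 / (2 * s\<^sup>2)) = inverse (exp ((x - \<mu>)\<^sup>2 / (2 * s\<^sup>2)))"
    by (simp add: exp_minus[symmetric])
  moreover have "exp (ln (\<sigma> / s)) = \<sigma> / s"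
    using assms by simp
  ultimately have e: "exp (gaussian_log_ratio \<sigma> \<mu> s x)
      = \<sigma> / s * exp (x\<^sup>2 / (2 * \<sigma>\<^sup>2)) * exp (- (x - \<mu>)\<^sup>2 / (2 * s\<^sup>2))"
    unfolding gaussian_log_ratio_def exp_add exp_diff by (simp only: divide_inverse)
  have cancel: "exp (- (x - 0)\<^sup>2 / (2 * \<sigma>\<^sup>2)) * exp (x\<^sup>2 / (2 * \<sigma>\<^sup>2)) = 1"
    by (simp flip: exp_add)
  have const: "1 / sqrt (2 * pi * \<sigma>\<^sup>2) * (\<sigma> / s) = 1 / sqrt (2 * pi * s\<^sup>2)"
    using assms by (simp add: sqrt_eq)
  have "normal_density 0 \<sigma> x * exp (gaussian_log_ratio \<sigma> \<mu> s x)
      = (1 / sqrt (2 * pi * \<sigma>\<^sup>2) * (\<sigma> / s)) * (exp (- (x - 0)\<^sup>2 / (2 * \<sigma>\<^sup>2)) * exp (x\<^sup>2 / (2 * \<sigma>\<^sup>2)))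
        * exp (- (x - \<mu>)\<^sup>2 / (2 * s\<^sup>2))"
    unfolding normal_density_def e by (simp only: ac_simps)
  also have "\<dots> = normal_density \<mu> s x"
    unfolding const cancel normal_density_def by simp
  finally show ?thesis .
qed

lemma borel_measurable_vec_nth_comp[measurable (raw)]:
  fixes f :: "'b \<Rightarrow> real ^ 'n"
  shows "f \<in> borel_measurable M \<Longrightarrow> (\<lambda>x. f x $ i) \<in> borel_measurable M"
  using measurable_compose[OF _ borel_measurable_nth] by blast

locale gaussian_unbiased_estimate = prob_space M
  for M :: "'a measure" and X Xhat :: "'a \<Rightarrow> real ^ 'n" and \<sigma> :: real +
  assumes sigma_pos: "0 < \<sigma>"
    and X_measurable[measurable]: "X \<in> borel_measurable M"
    and Xhat_measurable[measurable]: "Xhat \<in> borel_measurable M"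
    and indep_coords: "indep_vars (\<lambda>_. borel) (\<lambda>t \<omega>. X \<omega> $ t) UNIV"
    and coord_normal: "\<And>t. distributed M lborel (\<lambda>\<omega>. X \<omega> $ t) (\<lambda>x. ennreal (normal_density 0 \<sigma> x))"
    and unbiased: "\<And>t. AE \<omega> in M.
          real_cond_exp M (vimage_algebra (space M) X borel) (\<lambda>\<omega>. Xhat \<omega> $ t) \<omega> = X \<omega> $ t"
    and error_square_integrable: "\<And>t. integrable M (\<lambda>\<omega>. (X \<omega> $ t - Xhat \<omega> $ t)\<^sup>2)"
begin

definition distortion :: real where
  "distortion = (1 / real CARD('n)) * (\<Sum>t\<in>UNIV. \<integral>\<omega>. (X \<omega> $ t - Xhat \<omega> $ t)\<^sup>2 \<partial>M)"

lemma coord_square_integrable: "integrable M (\<lambda>\<omega>. (X \<omega> $ t)\<^sup>2)"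
  using integrable_normal_moment[OF sigma_pos, of 0 2] distributed_integrable[OF coord_normal, of "\<lambda>x. x\<^sup>2"]
  by simp

lemma integral_coord_square: "(\<integral>\<omega>. (X \<omega> $ t)\<^sup>2 \<partial>M) = \<sigma>\<^sup>2"
  using integral_normal_moment_even[OF sigma_pos, of 0 1] distributed_integral[OF coord_normal, of "\<lambda>x. x\<^sup>2"]
  by (simp add: numeral_eq_Suc)

lemma coord_mult_error_integrable: "integrable M (\<lambda>\<omega>. X \<omega> $ t * (Xhat \<omega> $ t - X \<omega> $ t))"
  using error_square_integrable[of t] coord_square_integrable[of t]
  by (intro integrable_mult_of_square_integrable) (simp_all add: power2_commute)

lemma integral_coord_mult_error: "(\<integral>\<omega>. X \<omega> $ t * (Xhat \<omega> $ t - X \<omega> $ t) \<partial>M) = 0"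
proof -
  define F where "F = vimage_algebra (space M) X borel"
  have "subalgebra M F"
    unfolding subalgebra_def F_def sets_vimage_algebra
    by (auto intro!: sets.sigma_sets_subset measurable_sets[OF X_measurable])
  then interpret sigma_finite_subalgebra M F
    by (intro finite_measure_subalgebra_is_sigma_finite)
       (simp add: finite_measure_subalgebra_def finite_measure_subalgebra_axioms_def finite_measure_axioms)
  have [measurable]: "X \<in> borel_measurable F"
    unfolding F_def by (rule measurable_vimage_algebra1) simp
  have sum_eq: "X \<omega> $ t * Xhat \<omega> $ t = X \<omega> $ t * (Xhat \<omega> $ t - X \<omega> $ t) + (X \<omega> $ t)\<^sup>2" for \<omega>
    by (simp add: power2_eq_square algebra_simps)
  have "integrable M (\<lambda>\<omega>. X \<omega> $ t * Xhat \<omega> $ t)"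
    unfolding sum_eq using coord_mult_error_integrable coord_square_integrable by simp
  then have "(\<integral>\<omega>. X \<omega> $ t * Xhat \<omega> $ t \<partial>M) = (\<integral>\<omega>. (X \<omega> $ t)\<^sup>2 \<partial>M)"
    using unbiased[of t] unfolding F_def[symmetric]
    by (intro integral_mult_eq_integral_square_of_cond_exp) simp_all
  then show ?thesis
    using coord_mult_error_integrable coord_square_integrable unfolding sum_eq by simp
qed

lemma square_coord_minus_scaled_estimate_integrable:
  "integrable M (\<lambda>\<omega>. (X \<omega> $ t - a * Xhat \<omega> $ t)\<^sup>2)"
  and integral_square_coord_minus_scaled_estimate:
  "(\<integral>\<omega>. (X \<omega> $ t - a * Xhat \<omega> $ t)\<^sup>2 \<partial>M)
     = (1 - a)\<^sup>2 * \<sigma>\<^sup>2 + a\<^sup>2 * (\<integral>\<omega>. (X \<omega> $ t - Xhat \<omega> $ t)\<^sup>2 \<partial>M)"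
proof -
  have expand: "(X \<omega> $ t - a * Xhat \<omega> $ t)\<^sup>2 = (1 - a)\<^sup>2 * (X \<omega> $ t)\<^sup>2
      - 2 * a * (1 - a) * (X \<omega> $ t * (Xhat \<omega> $ t - X \<omega> $ t)) + a\<^sup>2 * (X \<omega> $ t - Xhat \<omega> $ t)\<^sup>2" for \<omega>
    by (simp add: power2_eq_square algebra_simps)
  note ints = coord_square_integrable[of t] coord_mult_error_integrable[of t] error_square_integrable[of t]
  show "integrable M (\<lambda>\<omega>. (X \<omega> $ t - a * Xhat \<omega> $ t)\<^sup>2)"
    unfolding expand using ints by simp
  show "(\<integral>\<omega>. (X \<omega> $ t - a * Xhat \<omega> $ t)\<^sup>2 \<partial>M)
      = (1 - a)\<^sup>2 * \<sigma>\<^sup>2 + a\<^sup>2 * (\<integral>\<omega>. (X \<omega> $ t - Xhat \<omega> $ t)\<^sup>2 \<partial>M)"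
    unfolding expand using ints by (simp add: integral_coord_square integral_coord_mult_error)
qed

lemma nn_integral_exp_gaussian_log_ratio:
  assumes "0 < s"
  shows "(\<integral>\<^sup>+ x. ennreal (exp (\<Sum>t\<in>UNIV. gaussian_log_ratio \<sigma> (\<mu> t) s (x $ t))) \<partial>distr M borel X) = 1"
proof -
  have coord: "(\<integral>\<^sup>+ \<omega>. ennreal (exp (gaussian_log_ratio \<sigma> (\<mu> t) s (X \<omega> $ t))) \<partial>M) = 1" for t
  proof -
    have "(\<integral>\<^sup>+ \<omega>. ennreal (exp (gaussian_log_ratio \<sigma> (\<mu> t) s (X \<omega> $ t))) \<partial>M)
        = (\<integral>\<^sup>+ x. ennreal (normal_density 0 \<sigma> x) * ennreal (exp (gaussian_log_ratio \<sigma> (\<mu> t) s x)) \<partial>lborel)"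
      by (rule distributed_nn_integral[OF coord_normal, symmetric]) (simp add: gaussian_log_ratio_def)
    also have "\<dots> = (\<integral>\<^sup>+ x. ennreal (normal_density (\<mu> t) s x) \<partial>lborel)"
      using normal_density_mult_exp_gaussian_log_ratio[OF sigma_pos \<open>0 < s\<close>]
      by (simp add: ennreal_mult'[symmetric])
    also have "\<dots> = 1"
      by (subst nn_integral_eq_integral)
         (auto simp: normal_density_nonneg integrable_normal_density[OF \<open>0 < s\<close>]
            integral_normal_density[OF \<open>0 < s\<close>])
    finally show ?thesis .
  qed
  have "(\<integral>\<^sup>+ x. ennreal (exp (\<Sum>t\<in>UNIV. gaussian_log_ratio \<sigma> (\<mu> t) s (x $ t))) \<partial>distr M borel X)
      = (\<integral>\<^sup>+ \<omega>. (\<Prod>t\<in>UNIV. ennreal (exp (gaussian_log_ratio \<sigma> (\<mu> t) s (X \<omega> $ t)))) \<partial>M)"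
    by (simp add: nn_integral_distr exp_sum prod_ennreal gaussian_log_ratio_def)
  also have "\<dots> = (\<Prod>t\<in>UNIV. \<integral>\<^sup>+ \<omega>. ennreal (exp (gaussian_log_ratio \<sigma> (\<mu> t) s (X \<omega> $ t))) \<partial>M)"
    by (intro indep_vars_nn_integral indep_vars_compose2[OF indep_coords])
       (simp_all add: gaussian_log_ratio_def)
  finally show ?thesis by (simp add: coord)
qed

lemma gaussian_log_ratio_estimate_integrable:
  "integrable M (\<lambda>\<omega>. \<Sum>t\<in>UNIV. gaussian_log_ratio \<sigma> (a * Xhat \<omega> $ t) s (X \<omega> $ t))"
  using coord_square_integrable square_coord_minus_scaled_estimate_integrable
  by (simp add: gaussian_log_ratio_def)

lemma integral_gaussian_log_ratio_estimate:
  "(\<integral>\<omega>. (\<Sum>t\<in>UNIV. gaussian_log_ratio \<sigma> (a * Xhat \<omega> $ t) s (X \<omega> $ t)) \<partial>M)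
     = real CARD('n) * (ln (\<sigma> / s) + 1 / 2 - ((1 - a)\<^sup>2 * \<sigma>\<^sup>2 + a\<^sup>2 * distortion) / (2 * s\<^sup>2))"
proof -
  have "(\<integral>\<omega>. (\<Sum>t\<in>UNIV. gaussian_log_ratio \<sigma> (a * Xhat \<omega> $ t) s (X \<omega> $ t)) \<partial>M)
      = (\<Sum>t\<in>UNIV. ln (\<sigma> / s) + 1 / 2 - ((1 - a)\<^sup>2 * \<sigma>\<^sup>2 + a\<^sup>2 * (\<integral>\<omega>. (X \<omega> $ t - Xhat \<omega> $ t)\<^sup>2 \<partial>M)) / (2 * s\<^sup>2))"
    using coord_square_integrable square_coord_minus_scaled_estimate_integrable sigma_pos
    by (simp add: gaussian_log_ratio_def integral_coord_square integral_square_coord_minus_scaled_estimate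
        prob_space)
  also have "\<dots> = real CARD('n) * (ln (\<sigma> / s) + 1 / 2 - ((1 - a)\<^sup>2 * \<sigma>\<^sup>2 + a\<^sup>2 * distortion) / (2 * s\<^sup>2))"
    by (simp add: distortion_def sum.distrib sum_subtractf sum_divide_distrib[symmetric]
        sum_distrib_left[symmetric] algebra_simps)
  finally show ?thesis .
qed

end

lemma shrinkage_variance_eq:
  fixes S D :: real
  assumes "0 < S" "0 < D"
  shows "(1 - S / (S + D))\<^sup>2 * S + (S / (S + D))\<^sup>2 * D = S * D / (S + D)"
proof -
  have "0 < S + D" using assms by simp
  have "1 - S / (S + D) = D / (S + D)" using \<open>0 < S + D\<close> by (simp add: field_simps)
  moreover have "(D / (S + D))\<^sup>2 * S + (S / (S + D))\<^sup>2 * D = S * D * (S + D) / (S + D)\<^sup>2"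
    by (simp add: power_divide divide_simps) (simp add: power2_eq_square algebra_simps)
  moreover have "S * D * (S + D) / (S + D)\<^sup>2 = S * D / (S + D)"
    using \<open>0 < S + D\<close> by (simp add: power2_eq_square)
  ultimately show ?thesis by simp
qed

lemma (in gaussian_unbiased_estimate) integral_gaussian_log_ratio_mmse_estimate:
  assumes D_pos: "0 < distortion"
  defines "a \<equiv> \<sigma>\<^sup>2 / (\<sigma>\<^sup>2 + distortion)"
    and "s \<equiv> sqrt (\<sigma>\<^sup>2 * distortion / (\<sigma>\<^sup>2 + distortion))"
  shows "(\<integral>\<omega>. (\<Sum>t\<in>UNIV. gaussian_log_ratio \<sigma> (a * Xhat \<omega> $ t) s (X \<omega> $ t)) \<partial>M)
    = real CARD('n) * (1 / 2 * ln (1 + \<sigma>\<^sup>2 / distortion))"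
proof -
  have "0 < s" unfolding s_def using sigma_pos D_pos by (simp add: add_pos_pos)
  have s_sq: "s\<^sup>2 = \<sigma>\<^sup>2 * distortion / (\<sigma>\<^sup>2 + distortion)"
    unfolding s_def using sigma_pos D_pos by (simp add: add_pos_pos)
  have shrinkage: "(1 - a)\<^sup>2 * \<sigma>\<^sup>2 + a\<^sup>2 * distortion = s\<^sup>2"
    unfolding s_sq a_def using sigma_pos D_pos by (simp add: shrinkage_variance_eq)
  have "ln (\<sigma> / s) = 1 / 2 * ln ((\<sigma> / s)\<^sup>2)"
    using sigma_pos \<open>0 < s\<close> by (simp add: ln_realpow)
  also have "(\<sigma> / s)\<^sup>2 = 1 + \<sigma>\<^sup>2 / distortion"
    unfolding power_divide s_sq using sigma_pos D_pos by (simp add: field_simps)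
  finally have "ln (\<sigma> / s) = 1 / 2 * ln (1 + \<sigma>\<^sup>2 / distortion)" .
  then show ?thesis
    using \<open>0 < s\<close> by (simp add: integral_gaussian_log_ratio_estimate shrinkage)
qed

lemma (in gaussian_unbiased_estimate) mutual_info_ge_gaussian_rate_distortion:
  assumes D_pos: "0 < distortion"
  shows "ereal (1 / 2 * ln (1 + \<sigma>\<^sup>2 / distortion))
    \<le> mutual_info M borel borel X Xhat / ereal (real CARD('n))"
proof -
  define a where "a = \<sigma>\<^sup>2 / (\<sigma>\<^sup>2 + distortion)"
  define s where "s = sqrt (\<sigma>\<^sup>2 * distortion / (\<sigma>\<^sup>2 + distortion))"
  have "0 < s" unfolding s_def using sigma_pos D_pos by (simp add: add_pos_pos)
  define g :: "(real ^ 'n) \<times> (real ^ 'n) \<Rightarrow> real"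
    where "g = (\<lambda>(x, y). \<Sum>t\<in>UNIV. gaussian_log_ratio \<sigma> (a * y $ t) s (x $ t))"
  have g_measurable: "g \<in> borel_measurable (borel \<Otimes>\<^sub>M borel)"
    unfolding g_def gaussian_log_ratio_def by measurable
  have "(\<integral>\<^sup>+ x. ennreal (exp (g (x, y))) \<partial>distr M borel X) = 1" for y
    using nn_integral_exp_gaussian_log_ratio[OF \<open>0 < s\<close>, of "\<lambda>t. a * y $ t"] by (simp add: g_def)
  then have "ereal (\<integral>\<omega>. g (X \<omega>, Xhat \<omega>) \<partial>M) \<le> mutual_info M borel borel X Xhat"
    using g_measurable gaussian_log_ratio_estimate_integrable
    by (intro mutual_info_ge_integral) (simp_all add: prob_space_axioms g_def)
  moreover have "(\<integral>\<omega>. g (X \<omega>, Xhat \<omega>) \<partial>M) = real CARD('n) * (1 / 2 * ln (1 + \<sigma>\<^sup>2 / distortion))"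
    using integral_gaussian_log_ratio_mmse_estimate[OF D_pos] by (simp add: g_def a_def s_def)
  ultimately have scaled: "ereal (real CARD('n)) * ereal (1 / 2 * ln (1 + \<sigma>\<^sup>2 / distortion))
      \<le> mutual_info M borel borel X Xhat"
    by (simp only: times_ereal.simps(1))
  have card: "0 < ereal (real CARD('n))" "ereal (real CARD('n)) \<noteq> \<infinity>"
    by simp_all
  show ?thesis
    unfolding ereal_le_divide_pos[OF card] by (rule scaled)
qed

theorem lemma3:
  fixes M :: "'a measure"
    and X Xhat :: "'a \<Rightarrow> real ^ 'n"
    and \<sigma> :: real
  assumes "prob_space M"
    and "\<sigma> > 0"
    and X_meas: "X \<in> borel_measurable M"
    and Xhat_meas: "Xhat \<in> borel_measurable M"
    and X_indep: "prob_space.indep_vars M (\<lambda>_. borel) (\<lambda>t \<omega>. X \<omega> $ t) UNIV"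
    and X_gauss: "\<And>t. distributed M lborel (\<lambda>\<omega>. X \<omega> $ t) (\<lambda>x. ennreal (normal_density 0 \<sigma> x))"
    and Xhat_int: "\<And>t. integrable M (\<lambda>\<omega>. Xhat \<omega> $ t)"
    and unbiased: "\<And>t. AE \<omega> in M.
          real_cond_exp M (vimage_algebra (space M) X borel) (\<lambda>\<omega>. Xhat \<omega> $ t) \<omega> = X \<omega> $ t"
    and D_finite: "\<And>t. integrable M (\<lambda>\<omega>. (X \<omega> $ t - Xhat \<omega> $ t)\<^sup>2)"
    and D_pos: "(1 / real CARD('n)) * (\<Sum>t\<in>UNIV. \<integral>\<omega>. (X \<omega> $ t - Xhat \<omega> $ t)\<^sup>2 \<partial>M) > 0"
  shows "ereal (1 / 2 * ln (1 + \<sigma>\<^sup>2 /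
            ((1 / real CARD('n)) * (\<Sum>t\<in>UNIV. \<integral>\<omega>. (X \<omega> $ t - Xhat \<omega> $ t)\<^sup>2 \<partial>M))))
         \<le> mutual_info M borel borel X Xhat / ereal (real CARD('n))"
proof -
  interpret gaussian_unbiased_estimate M X Xhat \<sigma>
    by (intro gaussian_unbiased_estimate.intro gaussian_unbiased_estimate_axioms.intro) (rule assms)+
  show ?thesis
    using mutual_info_ge_gaussian_rate_distortion D_pos unfolding distortion_def .
qed

end
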